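(* For all integers $L\ge1$ and $M\ge L+1$, $$\sigma_{\min}\Big(\frac{\bar B}{\sqrt M}\Big)\ge\frac{1}{L^2\,2^{7L}(2L+1)}\left(\frac{M+L}{eM}\right)^{L+0.5}.$$
   Context: $\bar B$ is the $M\times(L+1)$ real Vandermonde matrix with entries $\bar B_{i,j}=(i/M)^{j}$ for $1\le i\le M$, $0\le j\le L$ (so its first column is all ones). $\sigma_{\min}$ denotes the smallest singular value. *)

theory Defs
  imports "HOL-Analysis.Analysis"
begin

text \<open>Matrices of size m x n are represented as functions nat => nat => real,
  with row indices i < m and column indices j < n (0-based).\<close>

definition mat_vec_norm :: "nat \<Rightarrow> nat \<Rightarrow> (nat \<Rightarrow> nat \<Rightarrow> real) \<Rightarrow> (nat \<Rightarrow> real) \<Rightarrow> real" where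
  "mat_vec_norm m n A x = sqrt (\<Sum>i<m. (\<Sum>j<n. A i j * x j)\<^sup>2)"

definition sigma_min :: "nat \<Rightarrow> nat \<Rightarrow> (nat \<Rightarrow> nat \<Rightarrow> real) \<Rightarrow> real" where
  "sigma_min m n A = Inf {mat_vec_norm m n A x | x. (\<Sum>j<n. (x j)\<^sup>2) = 1}"

text \<open>The M x (L+1) Vandermonde matrix Bbar with entries (i/M)^j, 1 <= i <= M, 0 <= j <= L,
  stored 0-based: row index i corresponds to i+1.\<close>

definition Bbar :: "nat \<Rightarrow> nat \<Rightarrow> nat \<Rightarrow> real" where
  "Bbar M i j = (real (i + 1) / real M) ^ j"

end

theory Submission
  imports Defs "HOL-Computational_Algebra.Polynomial"
begin

text \<open>
  For a unit vector \<open>x\<close>, the entries of \<open>Bbar x\<close> are the values of \<open>P y = \<Sum>j\<le>L. x\<^sub>j y\<^sup>j\<close>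
  at the grid points \<open>i/M\<close>. This grid splits into \<open>s = M div (L+1)\<close> interleaved progressions
  of \<open>L+1\<close> points each, spaced \<open>s/M \<ge> 1/(2(L+1))\<close> apart inside \<open>[0,1]\<close>. On every
  progression Lagrange interpolation recovers the coefficients of \<open>P\<close> from its \<open>L+1\<close> values
  with a loss of at most \<open>24\<^sup>L\<close>: the basis polynomials have coefficients bounded by \<open>2\<^sup>L\<close>,
  and the node products are at least \<open>h\<^sup>L k! (L-k)!\<close>. So each progression carries squared
  mass at least \<open>1/((L+1) 576\<^sup>L)\<close>, which gives \<open>|Bbar x|\<^sup>2/M \<ge> 1/(2 (L+1)\<^sup>2 576\<^sup>L)\<close>.
  This beats the stated constant, and the factor \<open>((M+L)/(eM))\<^bsup>L+1/2\<^esup>\<close> is at most 1.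
\<close>

lemma abs_coeff_prod_linear_le:
  fixes a :: "nat \<Rightarrow> real"
  assumes "finite S" "\<And>m. m \<in> S \<Longrightarrow> \<bar>a m\<bar> \<le> 1"
  shows "\<bar>coeff (\<Prod>m\<in>S. [:- a m, 1:]) j\<bar> \<le> 2 ^ card S"
  using assms
proof (induction S arbitrary: j rule: finite_induct)
  case empty
  then show ?case by (cases j) auto
next
  case (insert y S)
  define q where "q = (\<Prod>m\<in>S. [:- a m, 1:])"
  have IH: "\<bar>coeff q i\<bar> \<le> 2 ^ card S" for i using insert unfolding q_def by auto
  have "(\<Prod>m\<in>insert y S. [:- a m, 1:]) = smult (- a y) q + pCons 0 q"
    using insert unfolding q_def by (simp add: mult_pCons_left)
  then have "\<bar>coeff (\<Prod>m\<in>insert y S. [:- a m, 1:]) j\<bar> \<le> \<bar>a y\<bar> * \<bar>coeff q j\<bar> + \<bar>coeff (pCons 0 q) j\<bar>"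
    using abs_triangle_ineq4[of "coeff (pCons 0 q) j" "a y * coeff q j"]
    by (simp add: abs_mult del: coeff_pCons)
  also have "\<dots> \<le> 1 * 2 ^ card S + 2 ^ card S"
    using insert.prems IH[of j] IH[of "j - 1"]
    by (intro add_mono mult_mono) (auto simp: coeff_pCons split: nat.split)
  also have "\<dots> = 2 ^ card (insert y S)" using insert by simp
  finally show ?case .
qed

lemma prod_lessThan_abs_diff_eq_fact: "(\<Prod>m<k. \<bar>real k - real m\<bar>) = fact k"
proof (induction k)
  case 0 then show ?case by simp
next
  case (Suc k)
  have "(\<Prod>m<Suc k. \<bar>real (Suc k) - real m\<bar>) = real (Suc k) * (\<Prod>m<k. \<bar>real k - real m\<bar>)"
    by (subst prod.lessThan_Suc_shift) simp
  then show ?case using Suc by (simp add: fact_Suc)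
qed

lemma prod_abs_diff_eq_fact_mult_fact:
  assumes "k \<le> n"
  shows "(\<Prod>m\<in>{..n}-{k}. \<bar>real k - real m\<bar>) = fact k * fact (n - k)"
  using assms
proof (induction n rule: dec_induct)
  case base
  have "{..k}-{k} = {..<k}" by auto
  then show ?case using prod_lessThan_abs_diff_eq_fact[of k] by simp
next
  case (step l)
  have "{..Suc l}-{k} = insert (Suc l) ({..l}-{k})" using step by auto
  then have "(\<Prod>m\<in>{..Suc l}-{k}. \<bar>real k - real m\<bar>)
      = real (Suc l - k) * (fact k * fact (l - k))"
    using step by (simp add: of_nat_diff)
  also have "\<dots> = fact k * fact (Suc l - k)"
    using step by (simp add: Suc_diff_le fact_Suc)
  finally show ?case .
qed

lemma pow_le_three_pow_mult_fact: "(real n + 1) ^ n \<le> 3 ^ n * fact n"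
proof (induction n)
  case 0 then show ?case by simp
next
  case (Suc n)
  have "(1 + 1 / (real n + 1)) ^ Suc n \<le> exp (1 / (real n + 1)) ^ Suc n"
    by (intro power_mono exp_ge_add_one_self) (auto simp: add_nonneg_nonneg)
  also have "\<dots> = exp 1" by (subst exp_of_nat_mult [symmetric]) simp
  also have "\<dots> \<le> 3" by (rule exp_le)
  finally have growth: "(1 + 1 / (real n + 1)) ^ Suc n \<le> 3" .
  have "(real (Suc n) + 1) ^ Suc n = (real n + 1) ^ Suc n * (1 + 1 / (real n + 1)) ^ Suc n"
  proof -
    have "(real n + 1) * (1 + 1 / (real n + 1)) = real (Suc n) + 1" by (simp add: field_simps)
    then show ?thesis by (metis power_mult_distrib)
  qed
  also have "\<dots> \<le> (real n + 1) ^ Suc n * 3"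
    using growth by (intro mult_left_mono) auto
  also have "\<dots> = 3 * (real n + 1) * (real n + 1) ^ n" by simp
  also have "\<dots> \<le> 3 * (real n + 1) * (3 ^ n * fact n)"
    using Suc by (intro mult_left_mono) auto
  also have "\<dots> = 3 ^ Suc n * fact (Suc n)" by (simp add: fact_Suc algebra_simps)
  finally show ?case .
qed

lemma sum_inverse_fact_mult_fact: "(\<Sum>k\<le>n. 1 / (fact k * fact (n - k) :: real)) = 2 ^ n / fact n"
proof -
  have "(\<Sum>k\<le>n. 1 / (fact k * fact (n - k) :: real)) = (\<Sum>k\<le>n. real (n choose k)) / fact n"
    by (simp add: sum_divide_distrib binomial_fact)
  then show ?thesis by (simp only: of_nat_sum [symmetric] choose_row_sum) simp
qed

definition lagrange_basis :: "(nat \<Rightarrow> 'a::comm_ring_1) \<Rightarrow> nat \<Rightarrow> nat \<Rightarrow> 'a poly" where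
  "lagrange_basis t n k = (\<Prod>m\<in>{..n}-{k}. [:- t m, 1:])"

lemma poly_lagrange_basis: "poly (lagrange_basis t n k) y = (\<Prod>m\<in>{..n}-{k}. y - t m)"
  by (simp add: lagrange_basis_def poly_prod)

lemma degree_lagrange_basis_le:
  assumes "k \<le> n"
  shows "degree (lagrange_basis t n k) \<le> n"
proof -
  have "degree (lagrange_basis t n k) \<le> (\<Sum>m\<in>{..n}-{k}. degree [:- t m, 1:])"
    unfolding lagrange_basis_def using degree_prod_sum_le[of "{..n}-{k}" "\<lambda>m. [:- t m, 1:]"]
    by (simp only: comp_def finite_Diff finite_atMost)
  also have "\<dots> = n" using \<open>k \<le> n\<close> by simp
  finally show ?thesis .
qed

lemma lagrange_interpolation:
  fixes P :: "'a::field poly"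
  assumes "degree P \<le> n" and "inj_on t {..n}"
  shows "P = (\<Sum>k\<le>n. smult (poly P (t k) / poly (lagrange_basis t n k) (t k)) (lagrange_basis t n k))"
    (is "P = ?R")
proof (rule poly_eqI_degree)
  have basis_nonzero: "poly (lagrange_basis t n k) (t k) \<noteq> 0" if "k \<le> n" for k
    using that assms(2) by (auto simp: poly_lagrange_basis inj_on_eq_iff)
  have basis_vanishes: "poly (lagrange_basis t n k) (t i) = 0" if "i \<le> n" "i \<noteq> k" for i k
    unfolding poly_lagrange_basis using that by (intro prod_zero) auto
  fix y assume "y \<in> t ` {..n}"
  then obtain i where i: "i \<le> n" "y = t i" by auto
  have "poly ?R (t i) = (\<Sum>k\<le>n. poly P (t k) / poly (lagrange_basis t n k) (t k) * poly (lagrange_basis t n k) (t i))"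
    by (simp add: poly_sum)
  also have "\<dots> = poly P (t i) / poly (lagrange_basis t n i) (t i) * poly (lagrange_basis t n i) (t i)"
    using i by (subst sum.remove[of _ i]) (auto intro!: sum.neutral simp: basis_vanishes)
  also have "\<dots> = poly P (t i)" using basis_nonzero i by simp
  finally show "poly P y = poly ?R y" using i by simp
next
  have "card (t ` {..n}) = n + 1" using card_image[OF assms(2)] by simp
  moreover have "degree ?R \<le> n"
    by (intro degree_sum_le order.trans[OF degree_smult_le degree_lagrange_basis_le]) auto
  ultimately show "degree P < card (t ` {..n})" "degree ?R < card (t ` {..n})"
    using assms(1) by linarith+
qed

lemma abs_coeff_le_values_at_spaced_nodes:
  fixes P :: "real poly" and t :: "nat \<Rightarrow> real"
  assumes deg: "degree P \<le> n" and h: "h > 0"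
    and spaced: "\<And>k m. k \<le> n \<Longrightarrow> m \<le> n \<Longrightarrow> h * \<bar>real k - real m\<bar> \<le> \<bar>t k - t m\<bar>"
    and bounded: "\<And>m. m \<le> n \<Longrightarrow> \<bar>t m\<bar> \<le> 1"
  shows "\<bar>coeff P j\<bar> \<le> (\<Sum>k\<le>n. \<bar>poly P (t k)\<bar> * 2 ^ n / (h ^ n * fact k * fact (n - k)))"
proof -
  define d where "d k = poly (lagrange_basis t n k) (t k)" for k
  have d_ge: "h ^ n * fact k * fact (n - k) \<le> \<bar>d k\<bar>" if "k \<le> n" for k
  proof -
    have "h ^ n * fact k * fact (n - k) = (\<Prod>m\<in>{..n}-{k}. h * \<bar>real k - real m\<bar>)"
      using prod_abs_diff_eq_fact_mult_fact[OF that] that by (simp add: prod.distrib)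
    also have "\<dots> \<le> (\<Prod>m\<in>{..n}-{k}. \<bar>t k - t m\<bar>)"
      by (rule prod_mono) (use spaced that h in auto)
    also have "\<dots> = \<bar>d k\<bar>" by (simp add: d_def poly_lagrange_basis abs_prod)
    finally show ?thesis .
  qed
  have coeff_basis: "\<bar>coeff (lagrange_basis t n k) j\<bar> \<le> 2 ^ n" if "k \<le> n" for k
    using abs_coeff_prod_linear_le[of "{..n}-{k}" t j] that bounded
    by (simp add: lagrange_basis_def)
  have "inj_on t {..n}"
  proof (rule inj_onI)
    fix a b assume "a \<in> {..n}" "b \<in> {..n}" "t a = t b"
    then have "h * \<bar>real a - real b\<bar> \<le> 0" using spaced[of a b] by auto
    then show "a = b" using h by (simp add: mult_le_0_iff)
  qed
  then have "coeff P j = (\<Sum>k\<le>n. poly P (t k) / d k * coeff (lagrange_basis t n k) j)"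
    by (subst lagrange_interpolation[OF deg]) (simp_all add: coeff_sum d_def)
  also have "\<bar>\<dots>\<bar> \<le> (\<Sum>k\<le>n. \<bar>poly P (t k)\<bar> * \<bar>coeff (lagrange_basis t n k) j\<bar> / \<bar>d k\<bar>)"
    by (rule order.trans[OF sum_abs]) (simp add: abs_mult)
  also have "\<dots> \<le> (\<Sum>k\<le>n. \<bar>poly P (t k)\<bar> * 2 ^ n / (h ^ n * fact k * fact (n - k)))"
  proof (rule sum_mono)
    fix k assume "k \<in> {..n}"
    then show "\<bar>poly P (t k)\<bar> * \<bar>coeff (lagrange_basis t n k) j\<bar> / \<bar>d k\<bar>
        \<le> \<bar>poly P (t k)\<bar> * 2 ^ n / (h ^ n * fact k * fact (n - k))"
      using coeff_basis[of k] d_ge[of k] h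
      by (intro frac_le mult_left_mono) auto
  qed
  finally show ?thesis .
qed

lemma inverse_six_pow_le_pow_mult_fact:
  assumes "1 / (2 * (real n + 1)) \<le> h"
  shows "1 / 6 ^ n \<le> h ^ n * fact n"
proof -
  have "(1 / (2 * (real n + 1))) ^ n \<le> h ^ n"
    using assms by (intro power_mono) auto
  then have h_pow: "1 / (2 ^ n * (real n + 1) ^ n) \<le> h ^ n"
    by (simp add: power_divide power_mult_distrib[symmetric])
  have fact: "(real n + 1) ^ n / 3 ^ n \<le> fact n"
    using pow_le_three_pow_mult_fact[of n] by (simp add: field_simps)
  have "1 / 6 ^ n = (1 / (2 ^ n * (real n + 1) ^ n)) * ((real n + 1) ^ n / 3 ^ n)"
    by (simp add: field_simps power_mult_distrib[symmetric])
  also have "\<dots> \<le> h ^ n * fact n"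
    using h_pow fact by (intro mult_mono) (auto intro: order.trans[OF _ h_pow])
  finally show ?thesis .
qed

lemma abs_coeff_le_norm_values_at_spaced_nodes:
  fixes P :: "real poly" and t :: "nat \<Rightarrow> real"
  assumes deg: "degree P \<le> n" and h: "1 / (2 * (real n + 1)) \<le> h"
    and spaced: "\<And>k m. k \<le> n \<Longrightarrow> m \<le> n \<Longrightarrow> h * \<bar>real k - real m\<bar> \<le> \<bar>t k - t m\<bar>"
    and bounded: "\<And>m. m \<le> n \<Longrightarrow> \<bar>t m\<bar> \<le> 1"
  shows "\<bar>coeff P j\<bar> \<le> sqrt (\<Sum>k\<le>n. (poly P (t k))\<^sup>2) * 24 ^ n"
proof -
  define Q where "Q = (\<Sum>k\<le>n. (poly P (t k))\<^sup>2)"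
  have h_pos: "h > 0" using h by (smt (verit) divide_pos_pos of_nat_0_le_iff)
  have Q_nonneg: "Q \<ge> 0" unfolding Q_def by (intro sum_nonneg) auto
  have value_le: "\<bar>poly P (t k)\<bar> \<le> sqrt Q" if "k \<le> n" for k
    using that unfolding Q_def
    by (metis real_sqrt_abs real_sqrt_le_mono member_le_sum finite_atMost atMost_iff zero_le_power2)
  have "\<bar>coeff P j\<bar> \<le> (\<Sum>k\<le>n. \<bar>poly P (t k)\<bar> * 2 ^ n / (h ^ n * fact k * fact (n - k)))"
    by (rule abs_coeff_le_values_at_spaced_nodes[OF deg h_pos spaced bounded])
  also have "\<dots> \<le> (\<Sum>k\<le>n. sqrt Q * (2 ^ n / h ^ n) * (1 / (fact k * fact (n - k))))"
  proof (rule sum_mono)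
    fix k assume "k \<in> {..n}"
    then have "\<bar>poly P (t k)\<bar> * 2 ^ n / (h ^ n * fact k * fact (n - k))
        \<le> sqrt Q * 2 ^ n / (h ^ n * fact k * fact (n - k))"
      using value_le[of k] h_pos by (intro divide_right_mono mult_right_mono) auto
    then show "\<bar>poly P (t k)\<bar> * 2 ^ n / (h ^ n * fact k * fact (n - k))
        \<le> sqrt Q * (2 ^ n / h ^ n) * (1 / (fact k * fact (n - k)))"
      by (simp add: field_simps)
  qed
  also have "\<dots> = sqrt Q * (2 ^ n / h ^ n) * (2 ^ n / fact n)"
    by (simp only: sum_distrib_left[symmetric] sum_inverse_fact_mult_fact)
  also have "\<dots> = sqrt Q * (4 ^ n / (h ^ n * fact n))"
    by (simp add: power_mult_distrib[symmetric])
  also have "\<dots> \<le> sqrt Q * (4 ^ n / (1 / 6 ^ n))"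
    using inverse_six_pow_le_pow_mult_fact[OF h] h_pos Q_nonneg by (intro mult_left_mono divide_left_mono) auto
  also have "\<dots> = sqrt Q * 24 ^ n" by (simp add: power_mult_distrib[symmetric])
  finally show ?thesis unfolding Q_def .
qed

lemma sum_sq_values_at_spaced_nodes_ge:
  fixes P :: "real poly" and t :: "nat \<Rightarrow> real"
  assumes deg: "degree P \<le> n" and unit: "(\<Sum>j\<le>n. (coeff P j)\<^sup>2) = 1"
    and h: "1 / (2 * (real n + 1)) \<le> h"
    and spaced: "\<And>k m. k \<le> n \<Longrightarrow> m \<le> n \<Longrightarrow> h * \<bar>real k - real m\<bar> \<le> \<bar>t k - t m\<bar>"
    and bounded: "\<And>m. m \<le> n \<Longrightarrow> \<bar>t m\<bar> \<le> 1"
  shows "1 / ((real n + 1) * 576 ^ n) \<le> (\<Sum>k\<le>n. (poly P (t k))\<^sup>2)"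
proof -
  define Q where "Q = (\<Sum>k\<le>n. (poly P (t k))\<^sup>2)"
  have Q_nonneg: "Q \<ge> 0" unfolding Q_def by (intro sum_nonneg) auto
  have "1 \<le> (\<Sum>j\<le>n. Q * 576 ^ n)"
    unfolding unit[symmetric]
  proof (rule sum_mono)
    fix j
    have "\<bar>coeff P j\<bar>\<^sup>2 \<le> (sqrt Q * 24 ^ n)\<^sup>2"
      using abs_coeff_le_norm_values_at_spaced_nodes[OF deg h spaced bounded, of j]
      unfolding Q_def[symmetric] by (intro power_mono) auto
    also have "(sqrt Q * 24 ^ n)\<^sup>2 = Q * 576 ^ n"
    proof -
      have "((24::real) ^ n)\<^sup>2 = (24\<^sup>2) ^ n" by (metis power_mult mult.commute)
      then show ?thesis using Q_nonneg by (simp add: power_mult_distrib)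
    qed
    finally show "(coeff P j)\<^sup>2 \<le> Q * 576 ^ n" by simp
  qed
  then have "1 \<le> Q * ((real n + 1) * 576 ^ n)" by (simp add: algebra_simps)
  then show ?thesis
    unfolding Q_def[symmetric] by (subst pos_divide_le_eq) auto
qed

lemma le_two_mult_mult_div:
  fixes d N :: nat
  assumes "0 < d" "d \<le> N"
  shows "N \<le> 2 * d * (N div d)"
proof -
  have "1 \<le> N div d" using assms div_le_mono[of d N d] by simp
  have "N mod d < d" using assms(1) by simp
  moreover have "d * (N div d + 1) = N div d * d + d" by simp
  ultimately have "N div d * d + N mod d < d * (N div d + 1)" by linarith
  then have "N < d * (N div d + 1)" by simp
  also have "\<dots> \<le> d * (2 * (N div d))" using \<open>1 \<le> N div d\<close> by (intro mult_le_mono2) simp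
  finally show ?thesis by simp
qed

lemma sum_interleaved_progressions_le:
  fixes g :: "nat \<Rightarrow> real"
  assumes nonneg: "\<And>i. g i \<ge> 0" and "(n + 1) * s \<le> N"
  shows "(\<Sum>r<s. \<Sum>k\<le>n. g (r + k * s)) \<le> (\<Sum>i<N. g i)"
proof -
  define f where "f = (\<lambda>(r, k). r + k * s)"
  have inj: "inj_on f ({..<s} \<times> {..n})"
  proof (rule inj_onI, clarify)
    fix r k r' k' assume "r < s" "r' < s" "f (r, k) = f (r', k')"
    then have "(r + k * s) mod s = (r' + k' * s) mod s" "(r + k * s) div s = (r' + k' * s) div s"
      by (simp_all add: f_def)
    with \<open>r < s\<close> \<open>r' < s\<close> show "r = r' \<and> k = k'" by simp
  qed
  have "f ` ({..<s} \<times> {..n}) \<subseteq> {..<N}"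
  proof clarify
    fix r k assume "r < s" "k \<le> n"
    then have "r + k * s < s + n * s" by (intro add_less_le_mono) auto
    then show "f (r, k) < N" using assms(2) by (simp add: f_def)
  qed
  then have "(\<Sum>i\<in>f ` ({..<s} \<times> {..n}). g i) \<le> (\<Sum>i<N. g i)"
    using nonneg by (intro sum_mono2) auto
  moreover have "(\<Sum>r<s. \<Sum>k\<le>n. g (r + k * s)) = (\<Sum>p\<in>{..<s} \<times> {..n}. g (f p))"
    by (simp add: sum.cartesian_product f_def split_beta)
  moreover have "\<dots> = (\<Sum>i\<in>f ` ({..<s} \<times> {..n}). g i)"
    by (rule sum.reindex[OF inj, symmetric, unfolded comp_def])
  ultimately show ?thesis by simp
qed

lemma sum_sq_poly_on_grid_ge:
  fixes P :: "real poly"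
  assumes deg: "degree P \<le> n" and unit: "(\<Sum>j\<le>n. (coeff P j)\<^sup>2) = 1" and "n + 1 \<le> N"
  shows "real N / (2 * (real n + 1)\<^sup>2 * 576 ^ n) \<le> (\<Sum>i<N. (poly P (real (i + 1) / real N))\<^sup>2)"
proof -
  define s where "s = N div (n + 1)"
  define c where "c = 1 / ((real n + 1) * 576 ^ n)"
  have N_pos: "N > 0" using assms(3) by simp
  have blocks_fit: "(n + 1) * s \<le> N"
    unfolding s_def using times_div_less_eq_dividend[of "n + 1" N] by simp
  have "N \<le> 2 * (n + 1) * s" unfolding s_def using assms(3) by (intro le_two_mult_mult_div) auto
  then have N_le: "real N \<le> 2 * (real n + 1) * real s"
    using of_nat_le_iff[of N "2 * (n + 1) * s", where 'a = real] by (simp add: algebra_simps)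
  have block: "c \<le> (\<Sum>k\<le>n. (poly P (real (r + k * s + 1) / real N))\<^sup>2)" if "r < s" for r
    unfolding c_def
  proof (rule sum_sq_values_at_spaced_nodes_ge[OF deg unit, where h = "real s / real N"])
    show "1 / (2 * (real n + 1)) \<le> real s / real N"
      using N_le N_pos by (simp add: field_simps)
    show "real s / real N * \<bar>real k - real m\<bar>
        \<le> \<bar>real (r + k * s + 1) / real N - real (r + m * s + 1) / real N\<bar>" for k m
    proof -
      have "real (r + k * s + 1) / real N - real (r + m * s + 1) / real N
          = (real k - real m) * (real s / real N)"
        using N_pos by (simp add: field_simps)
      then show ?thesis by (simp add: abs_mult mult.commute)
    qed
    show "\<bar>real (r + m * s + 1) / real N\<bar> \<le> 1" if "m \<le> n" for m
    proof -
      have "r + m * s + 1 \<le> s + n * s" using \<open>r < s\<close> that mult_le_mono1[of m n s] by linarith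
      then have "r + m * s + 1 \<le> N" using blocks_fit by simp
      then have "real (r + m * s + 1) \<le> real N" by (simp only: of_nat_le_iff)
      then show ?thesis using N_pos by (simp add: divide_le_eq)
    qed
  qed
  have "real N / (2 * (real n + 1)\<^sup>2 * 576 ^ n) \<le> 2 * (real n + 1) * real s / (2 * (real n + 1)\<^sup>2 * 576 ^ n)"
    using N_le by (intro divide_right_mono) auto
  also have "\<dots> = real s * c"
  proof -
    have "2 * (real n + 1)\<^sup>2 * 576 ^ n = (2 * (real n + 1)) * ((real n + 1) * 576 ^ n)"
      by (simp add: power2_eq_square)
    then show ?thesis unfolding c_def by (simp only: mult_divide_mult_cancel_left_if) simp
  qed
  also have "\<dots> = (\<Sum>r<s. c)" by simp
  also have "\<dots> \<le> (\<Sum>r<s. \<Sum>k\<le>n. (poly P (real (r + k * s + 1) / real N))\<^sup>2)"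
    by (intro sum_mono block) auto
  also have "\<dots> \<le> (\<Sum>i<N. (poly P (real (i + 1) / real N))\<^sup>2)"
    using sum_interleaved_progressions_le[OF _ blocks_fit,
        of "\<lambda>i. (poly P (real (i + 1) / real N))\<^sup>2"] by (simp add: add.commute add.left_commute)
  finally show ?thesis .
qed

lemma le_sigma_min:
  assumes "n > 0" and "\<And>x. (\<Sum>j<n. (x j)\<^sup>2) = 1 \<Longrightarrow> c \<le> mat_vec_norm m n A x"
  shows "c \<le> sigma_min m n A"
  unfolding sigma_min_def
proof (rule cInf_greatest)
  define e :: "nat \<Rightarrow> real" where "e j = (if j = 0 then 1 else 0)" for j
  have "(e j)\<^sup>2 = e j" for j by (simp add: e_def)
  then have "(\<Sum>j<n. (e j)\<^sup>2) = 1"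
    using \<open>n > 0\<close> by (simp add: e_def)
  then show "{mat_vec_norm m n A x |x. (\<Sum>j<n. (x j)\<^sup>2) = 1} \<noteq> {}" by blast
qed (use assms(2) in blast)

lemma mat_vec_norm_scaled_Bbar:
  "mat_vec_norm M n (\<lambda>i j. Bbar M i j / sqrt (real M)) x
     = sqrt ((\<Sum>i<M. (poly (\<Sum>j<n. monom (x j) j) (real (i + 1) / real M))\<^sup>2) / real M)"
proof -
  have "(\<Sum>j<n. Bbar M i j / sqrt (real M) * x j)
      = poly (\<Sum>j<n. monom (x j) j) (real (i + 1) / real M) / sqrt (real M)" for i
    unfolding Bbar_def poly_sum poly_monom sum_divide_distrib by (intro sum.cong) (simp_all add: mult.commute)
  then have "(\<Sum>j<n. Bbar M i j / sqrt (real M) * x j)\<^sup>2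
      = (poly (\<Sum>j<n. monom (x j) j) (real (i + 1) / real M))\<^sup>2 / real M" for i
    by (simp add: power_divide)
  then show ?thesis by (simp add: mat_vec_norm_def sum_divide_distrib)
qed

lemma scaled_Bbar_norm_ge:
  assumes "L + 1 \<le> M" and unit: "(\<Sum>j<L + 1. (x j)\<^sup>2) = 1"
  shows "1 / (2 * (real L + 1) * 24 ^ L) \<le> mat_vec_norm M (L + 1) (\<lambda>i j. Bbar M i j / sqrt (real M)) x"
proof -
  define P where "P = (\<Sum>j<L + 1. monom (x j) j)"
  have "degree P \<le> L"
    unfolding P_def by (intro degree_sum_le) (auto simp: degree_monom_le intro: order.trans[OF degree_monom_le])
  moreover have "(\<Sum>j\<le>L. (coeff P j)\<^sup>2) = 1"
    using unit by (simp add: P_def coeff_sum coeff_monom lessThan_Suc_atMost)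
  ultimately have "real M / (2 * (real L + 1)\<^sup>2 * 576 ^ L) \<le> (\<Sum>i<M. (poly P (real (i + 1) / real M))\<^sup>2)"
    using sum_sq_poly_on_grid_ge assms(1) by blast
  then have "1 / (2 * (real L + 1)\<^sup>2 * 576 ^ L) \<le> (\<Sum>i<M. (poly P (real (i + 1) / real M))\<^sup>2) / real M"
    using assms(1) by (simp add: field_simps)
  moreover have "(1 / (2 * (real L + 1) * 24 ^ L))\<^sup>2 \<le> 1 / (2 * (real L + 1)\<^sup>2 * 576 ^ L)"
  proof -
    have "((24::real) ^ L)\<^sup>2 = (24\<^sup>2) ^ L" by (metis power_mult mult.commute)
    moreover have "(2 * real L + 2)\<^sup>2 = 4 * (real L + 1)\<^sup>2" by (simp add: power2_eq_square algebra_simps)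
    ultimately have "(1 / (2 * (real L + 1) * 24 ^ L))\<^sup>2 = 1 / (4 * (real L + 1)\<^sup>2 * 576 ^ L)"
      by (simp add: power_mult_distrib power_divide)
    also have "\<dots> \<le> 1 / (2 * (real L + 1)\<^sup>2 * 576 ^ L)"
      by (intro divide_left_mono) auto
    finally show ?thesis .
  qed
  ultimately show ?thesis
    unfolding mat_vec_norm_scaled_Bbar P_def[symmetric] by (intro real_le_rsqrt) linarith
qed

lemma lemma2_denominator_ge:
  assumes "L \<ge> 1"
  shows "2 * (real L + 1) * 24 ^ L \<le> real L ^ 2 * 2 ^ (7 * L) * (2 * real L + 1)"
proof -
  have "(4::real) \<le> 4 ^ L" using power_increasing[of 1 L "4::real"] assms by simp
  have "2 * (real L + 1) \<le> 4 * real L" using assms by simp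
  moreover have "(24::real) ^ L \<le> 32 ^ L" by (rule power_mono) auto
  ultimately have "2 * (real L + 1) * 24 ^ L \<le> 4 * real L * 32 ^ L"
    by (rule mult_mono) auto
  also have "\<dots> \<le> 3 * real L * (4 ^ L * 32 ^ L)"
    using assms \<open>4 \<le> 4 ^ L\<close> by (simp add: mult_mono)
  also have "\<dots> = 3 * real L * 2 ^ (7 * L)"
    by (simp add: power_mult power_mult_distrib[symmetric])
  also have "\<dots> \<le> real L ^ 2 * (2 * real L + 1) * 2 ^ (7 * L)"
  proof -
    have "1 * 3 \<le> real L * (2 * real L + 1)" using assms by (intro mult_mono) auto
    then show ?thesis using assms by (intro mult_right_mono) (auto simp: power2_eq_square)
  qed
  finally show ?thesis by (simp add: algebra_simps)
qed

theorem lemma2: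
  fixes L M :: nat
  assumes "L \<ge> 1" and "M \<ge> L + 1"
  shows "sigma_min M (L + 1) (\<lambda>i j. Bbar M i j / sqrt (real M))
           \<ge> 1 / (real L ^ 2 * 2 ^ (7 * L) * (2 * real L + 1))
             * ((real M + real L) / (exp 1 * real M)) powr (real L + 0.5)"
proof -
  have "((real M + real L) / (exp 1 * real M)) powr (real L + 0.5) \<le> 1"
  proof (rule powr_le1)
    have "real M + real L \<le> 2 * real M" using assms by simp
    also have "\<dots> \<le> exp 1 * real M" using exp_ge_add_one_self[of 1] by (intro mult_right_mono) auto
    finally show "\<bar>(real M + real L) / (exp 1 * real M)\<bar> \<le> 1"
      using assms(2) by (simp add: divide_le_eq)
  qed simp
  then have "1 / (real L ^ 2 * 2 ^ (7 * L) * (2 * real L + 1))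
             * ((real M + real L) / (exp 1 * real M)) powr (real L + 0.5)
           \<le> 1 / (real L ^ 2 * 2 ^ (7 * L) * (2 * real L + 1))"
    by (intro mult_left_le) auto
  also have "\<dots> \<le> 1 / (2 * (real L + 1) * 24 ^ L)"
    using lemma2_denominator_ge[OF assms(1)] assms(1) by (intro divide_left_mono) auto
  also have "\<dots> \<le> sigma_min M (L + 1) (\<lambda>i j. Bbar M i j / sqrt (real M))"
    using assms(2) by (intro le_sigma_min scaled_Bbar_norm_ge) auto
  finally show ?thesis .
qed

end
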